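(* Let $k$ be a field, let $k_\omega$ be the $k$-algebra of all $\mathbb{N}\times\mathbb{N}$ matrices over $k$ (rows and columns indexed by positive integers) in which each row has only finitely many non-zero entries, let $N\subseteq k_\omega$ be the set of strictly lower triangular matrices with only finitely many non-zero entries, and let $R=k+N$ (scalar matrices plus $N$), a subalgebra of $k_\omega$. Then $R$ is left almost perfect but not right almost perfect; more precisely, if $I$ is the two-sided ideal of $R$ generated by the matrix unit $E_{2,1}$, then $R/I$ is not right perfect.
   Context: $E_{i,j}$ denotes the matrix unit with $1$ in position $(i,j)$ and $0$ elsewhere. A ring $R$ is right (resp. left) almost perfect if $R/I$ is a right (resp. left) perfect ring for every two-sided ideal $I$ of $R$ with $I\neq 0$, $I\neq R$. *)

theory Defs
  imports "HOL-Algebra.QuotRing"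
begin

definition left_ideal :: "('a, 'b) ring_scheme \<Rightarrow> 'a set \<Rightarrow> bool" where
  "left_ideal R L \<longleftrightarrow> additive_subgroup L R \<and>
     (\<forall>r\<in>carrier R. \<forall>x\<in>L. r \<otimes>\<^bsub>R\<^esub> x \<in> L)"

definition maximal_left_ideal :: "('a, 'b) ring_scheme \<Rightarrow> 'a set \<Rightarrow> bool" where
  "maximal_left_ideal R L \<longleftrightarrow> left_ideal R L \<and> L \<noteq> carrier R \<and>
     (\<forall>L'. left_ideal R L' \<and> L \<subseteq> L' \<and> L' \<noteq> carrier R \<longrightarrow> L' = L)"

definition jacobson_radical :: "('a, 'b) ring_scheme \<Rightarrow> 'a set" where
  "jacobson_radical R = carrier R \<inter> \<Inter> {L. maximal_left_ideal R L}"

definition left_artinian :: "('a, 'b) ring_scheme \<Rightarrow> bool" where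
  "left_artinian R \<longleftrightarrow> (\<forall>f :: nat \<Rightarrow> 'a set.
     (\<forall>n. left_ideal R (f n) \<and> f (Suc n) \<subseteq> f n) \<longrightarrow> (\<exists>m. \<forall>n\<ge>m. f n = f m))"

definition semilocal :: "('a, 'b) ring_scheme \<Rightarrow> bool" where
  "semilocal R \<longleftrightarrow> left_artinian (R Quot (jacobson_radical R))"

fun lprod :: "('a, 'b) ring_scheme \<Rightarrow> (nat \<Rightarrow> 'a) \<Rightarrow> nat \<Rightarrow> 'a" where
  "lprod R a 0 = \<one>\<^bsub>R\<^esub>"
| "lprod R a (Suc n) = lprod R a n \<otimes>\<^bsub>R\<^esub> a n"

fun rprod :: "('a, 'b) ring_scheme \<Rightarrow> (nat \<Rightarrow> 'a) \<Rightarrow> nat \<Rightarrow> 'a" where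
  "rprod R a 0 = \<one>\<^bsub>R\<^esub>"
| "rprod R a (Suc n) = a n \<otimes>\<^bsub>R\<^esub> rprod R a n"

definition left_T_nilpotent :: "('a, 'b) ring_scheme \<Rightarrow> 'a set \<Rightarrow> bool" where
  "left_T_nilpotent R I \<longleftrightarrow> (\<forall>a. (\<forall>n. a n \<in> I) \<longrightarrow> (\<exists>n\<ge>1. lprod R a n = \<zero>\<^bsub>R\<^esub>))"

definition right_T_nilpotent :: "('a, 'b) ring_scheme \<Rightarrow> 'a set \<Rightarrow> bool" where
  "right_T_nilpotent R I \<longleftrightarrow> (\<forall>a. (\<forall>n. a n \<in> I) \<longrightarrow> (\<exists>n\<ge>1. rprod R a n = \<zero>\<^bsub>R\<^esub>))"

definition left_perfect :: "('a, 'b) ring_scheme \<Rightarrow> bool" where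
  "left_perfect R \<longleftrightarrow> semilocal R \<and> left_T_nilpotent R (jacobson_radical R)"

definition right_perfect :: "('a, 'b) ring_scheme \<Rightarrow> bool" where
  "right_perfect R \<longleftrightarrow> semilocal R \<and> right_T_nilpotent R (jacobson_radical R)"

definition left_almost_perfect :: "('a, 'b) ring_scheme \<Rightarrow> bool" where
  "left_almost_perfect R \<longleftrightarrow> (\<forall>I. ideal I R \<and> I \<noteq> {\<zero>\<^bsub>R\<^esub>} \<and> I \<noteq> carrier R
      \<longrightarrow> left_perfect (R Quot I))"

definition right_almost_perfect :: "('a, 'b) ring_scheme \<Rightarrow> bool" where
  "right_almost_perfect R \<longleftrightarrow> (\<forall>I. ideal I R \<and> I \<noteq> {\<zero>\<^bsub>R\<^esub>} \<and> I \<noteq> carrier R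
      \<longrightarrow> right_perfect (R Quot I))"

text \<open>Indices are 0-based: paper's index i corresponds to i-1 here.\<close>
type_synonym 'k mat = "nat \<Rightarrow> nat \<Rightarrow> 'k"

definition row_finite :: "'k::zero mat \<Rightarrow> bool" where
  "row_finite A \<longleftrightarrow> (\<forall>i. finite {j. A i j \<noteq> 0})"

definition komega_carrier :: "'k::field mat set" where
  "komega_carrier = {A. row_finite A}"

definition mat_mult :: "'k::field mat \<Rightarrow> 'k mat \<Rightarrow> 'k mat" where
  "mat_mult A B = (\<lambda>i j. \<Sum>l\<in>{l. A i l \<noteq> 0}. A i l * B l j)"

definition mat_one :: "'k::field mat" where
  "mat_one = (\<lambda>i j. if i = j then 1 else 0)"

definition mat_unit :: "nat \<Rightarrow> nat \<Rightarrow> 'k::field mat" where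
  "mat_unit p q = (\<lambda>i j. if i = p \<and> j = q then 1 else 0)"

definition N_set :: "'k::field mat set" where
  "N_set = {A. finite {(i, j). A i j \<noteq> 0} \<and> (\<forall>i j. i \<le> j \<longrightarrow> A i j = 0)}"

definition R_carrier :: "'k::field mat set" where
  "R_carrier = {(\<lambda>i j. c * mat_one i j + A i j) | c A. A \<in> N_set}"

definition komega :: "'k::field mat ring" where
  "komega = \<lparr>carrier = komega_carrier, mult = mat_mult, one = mat_one,
             zero = (\<lambda>i j. 0), add = (\<lambda>A B i j. A i j + B i j)\<rparr>"

definition R_ring :: "'k::field mat ring" where
  "R_ring = komega\<lparr>carrier := R_carrier\<rparr>"

end

theory Submission
  imports Defs
begin

(*
  The ring R = k + N is local: N is a two-sided ideal of nilpotent matrices, and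
  every element c*1 + A with c <> 0 is a unit (c times 1 + A/c, whose inverse is a finite geometric
  series).  Hence every proper two-sided ideal I lies in N, and R/I is again local with maximal ideal
  N/I.  A local ring has its maximal ideal as Jacobson radical and is semilocal, since it is a division
  ring modulo that ideal; so perfectness of R/I reduces to T-nilpotency of N/I.

  N is left
  T-nilpotent: products a_0 a_1 ... a_n push the support of a_0, which has finitely many rows, down
  and to the left until it vanishes.  On the right the ideal I generated by E_{2,1} consists of
  matrices supported in the first column, while E_{n+2,n+1} ... E_{3,2} E_{2,1} = E_{n+2,1} never lies
  in I; so R/I is not right perfect, although I is a non-zero proper ideal.
*)

section \<open>Local rings\<close>

definition local_ring_with :: "('a, 'b) ring_scheme \<Rightarrow> 'a set \<Rightarrow> bool" where
  "local_ring_with S M \<longleftrightarrow> ideal M S \<and> \<one>\<^bsub>S\<^esub> \<notin> M \<and> (\<forall>x\<in>carrier S. x \<notin> M \<longrightarrow> x \<in> Units S)"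

lemma local_ring_withD:
  assumes "local_ring_with S M"
  shows "ring S" "ideal M S" "M \<subseteq> carrier S" "\<one>\<^bsub>S\<^esub> \<notin> M"
    and "\<And>x. x \<in> carrier S \<Longrightarrow> x \<notin> M \<Longrightarrow> x \<in> Units S"
proof -
  show M: "ideal M S" and "\<one>\<^bsub>S\<^esub> \<notin> M"
    and "\<And>x. x \<in> carrier S \<Longrightarrow> x \<notin> M \<Longrightarrow> x \<in> Units S"
    using assms unfolding local_ring_with_def by simp_all
  show "ring S" by (rule ideal.axioms(2)[OF M])
  show "M \<subseteq> carrier S" using ideal.Icarr[OF M] by blast
qed

lemma left_ideal_subset: "left_ideal S L \<Longrightarrow> L \<subseteq> carrier S"
  unfolding left_ideal_def by (simp add: additive_subgroup.a_subset)

lemma left_ideal_zero: "left_ideal S L \<Longrightarrow> \<zero>\<^bsub>S\<^esub> \<in> L"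
  unfolding left_ideal_def by (simp add: additive_subgroup.zero_closed)

lemma ideal_imp_left_ideal: "ideal M S \<Longrightarrow> left_ideal S M"
  unfolding left_ideal_def by (simp add: ideal.axioms(1) ideal.I_l_closed)

lemma left_ideal_unit_eq_carrier:
  assumes "ring S" "left_ideal S L" "x \<in> L" "x \<in> Units S"
  shows "L = carrier S"
proof -
  interpret ring S by fact
  have closed: "r \<otimes>\<^bsub>S\<^esub> y \<in> L" if "r \<in> carrier S" "y \<in> L" for r y
    using assms(2) that unfolding left_ideal_def by blast
  have "\<one>\<^bsub>S\<^esub> \<in> L" using closed[OF Units_inv_closed[OF assms(4)] assms(3)] assms(4) by simp
  then have "carrier S \<subseteq> L" using closed[of _ "\<one>\<^bsub>S\<^esub>"] by (metis r_one subsetI)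
  then show ?thesis using left_ideal_subset[OF assms(2)] by blast
qed

lemma local_proper_left_ideal_subset:
  assumes "local_ring_with S M" "left_ideal S L" "L \<noteq> carrier S"
  shows "L \<subseteq> M"
proof
  fix x assume x: "x \<in> L"
  show "x \<in> M"
  proof (rule ccontr)
    assume "x \<notin> M"
    then have "x \<in> Units S"
      using local_ring_withD(5)[OF assms(1)] left_ideal_subset[OF assms(2)] x by blast
    then show False
      using left_ideal_unit_eq_carrier[OF local_ring_withD(1)[OF assms(1)] assms(2) x] assms(3) by blast
  qed
qed

text \<open>Consequently the maximal ideal is the unique maximal left ideal, i.e. the Jacobson radical.\<close>
lemma local_jacobson_radical:
  assumes loc: "local_ring_with S M"
  shows "jacobson_radical S = M"
proof -
  have LM: "left_ideal S M" by (rule ideal_imp_left_ideal[OF local_ring_withD(2)[OF loc]])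
  have MC: "M \<noteq> carrier S"
    using local_ring_withD(4)[OF loc] monoid.one_closed[OF ring.is_monoid[OF local_ring_withD(1)[OF loc]]]
    by blast
  have "maximal_left_ideal S L \<longleftrightarrow> L = M" for L
  proof
    assume max: "maximal_left_ideal S L"
    then have "L \<subseteq> M"
      using local_proper_left_ideal_subset[OF loc] unfolding maximal_left_ideal_def by blast
    with max LM MC show "L = M" unfolding maximal_left_ideal_def by blast
  next
    have "L' \<subseteq> M" if "left_ideal S L'" "L' \<noteq> carrier S" for L'
      using local_proper_left_ideal_subset[OF loc that] .
    then have "maximal_left_ideal S M" using LM MC unfolding maximal_left_ideal_def by blast
    then show "L = M \<Longrightarrow> maximal_left_ideal S L" by simp
  qed
  then have "{L. maximal_left_ideal S L} = {M}" by blast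
  then show ?thesis unfolding jacobson_radical_def using left_ideal_subset[OF LM] by blast
qed

text \<open>A ring in which every non-zero element is a unit has only the trivial left ideals, so every
  descending chain of left ideals stabilises.\<close>
lemma division_ring_left_artinian:
  assumes S: "ring S" and U: "\<forall>x\<in>carrier S. x \<noteq> \<zero>\<^bsub>S\<^esub> \<longrightarrow> x \<in> Units S"
  shows "left_artinian S"
  unfolding left_artinian_def
proof (intro allI impI)
  fix f :: "nat \<Rightarrow> 'a set"
  assume f: "\<forall>n. left_ideal S (f n) \<and> f (Suc n) \<subseteq> f n"
  have ideal_f: "left_ideal S (f n)" and zero_f: "\<zero>\<^bsub>S\<^esub> \<in> f n" for n
    using f left_ideal_zero by blast+
  have trivial: "f n = {\<zero>\<^bsub>S\<^esub>} \<or> f n = carrier S" for n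
  proof (cases "f n \<subseteq> {\<zero>\<^bsub>S\<^esub>}")
    case True
    then show ?thesis using zero_f[of n] by blast
  next
    case False
    then obtain x where x: "x \<in> f n" "x \<noteq> \<zero>\<^bsub>S\<^esub>" by blast
    then have "x \<in> Units S" using U left_ideal_subset[OF ideal_f] by blast
    then show ?thesis using left_ideal_unit_eq_carrier[OF S ideal_f x(1)] by blast
  qed
  have antimono: "m \<le> n \<Longrightarrow> f n \<subseteq> f m" for m n
    using lift_Suc_antimono_le[of f m n] f by simp
  show "\<exists>m. \<forall>n\<ge>m. f n = f m"
  proof (cases "\<exists>m. f m = {\<zero>\<^bsub>S\<^esub>}")
    case True
    then obtain m where m: "f m = {\<zero>\<^bsub>S\<^esub>}" by blast
    have "f n = f m" if "n \<ge> m" for n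
      using antimono[OF that] zero_f[of n] unfolding m by blast
    then show ?thesis by blast
  next
    case False
    then have "f n = carrier S" for n using trivial[of n] by blast
    then show ?thesis by simp
  qed
qed

section \<open>Quotients of local rings and perfectness\<close>

lemma quot_carrier_E: "x \<in> carrier (R Quot I) \<Longrightarrow> \<exists>z\<in>carrier R. x = I +>\<^bsub>R\<^esub> z"
  by (auto simp: FactRing_def A_RCOSETS_def')

lemma quot_one: "\<one>\<^bsub>R Quot I\<^esub> = I +>\<^bsub>R\<^esub> \<one>\<^bsub>R\<^esub>"
  by (simp add: FactRing_def)

lemma quot_zero: "\<zero>\<^bsub>R Quot I\<^esub> = I"
  by (simp add: FactRing_def)

lemma ring_hom_Units:
  assumes h: "h \<in> ring_hom R S" and "ring R" "ring S" and x: "x \<in> Units R"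
  shows "h x \<in> Units S"
proof -
  interpret R: ring R by fact
  interpret S: ring S by fact
  have y: "inv\<^bsub>R\<^esub> x \<in> carrier R" and xc: "x \<in> carrier R" using x by auto
  have "h (inv\<^bsub>R\<^esub> x) \<otimes>\<^bsub>S\<^esub> h x = \<one>\<^bsub>S\<^esub>" "h x \<otimes>\<^bsub>S\<^esub> h (inv\<^bsub>R\<^esub> x) = \<one>\<^bsub>S\<^esub>"
    using ring_hom_mult[OF h] ring_hom_one[OF h] y xc x
    by (metis R.Units_l_inv, metis R.Units_r_inv)
  then show ?thesis
    unfolding Units_def using ring_hom_closed[OF h] y xc by blast
qed

lemma lprod_closed: "ring R \<Longrightarrow> \<forall>n. a n \<in> carrier R \<Longrightarrow> lprod R a n \<in> carrier R"
  by (induction n) (simp_all add: ring.ring_simprules)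

lemma rprod_closed: "ring R \<Longrightarrow> \<forall>n. a n \<in> carrier R \<Longrightarrow> rprod R a n \<in> carrier R"
  by (induction n) (simp_all add: ring.ring_simprules)

lemma ring_hom_lprod:
  assumes h: "h \<in> ring_hom R S" and R: "ring R" and a: "\<forall>n. a n \<in> carrier R"
  shows "lprod S (\<lambda>n. h (a n)) n = h (lprod R a n)"
  by (induction n) (simp_all add: ring_hom_one[OF h] ring_hom_mult[OF h] lprod_closed[OF R a] a)

lemma ring_hom_rprod:
  assumes h: "h \<in> ring_hom R S" and R: "ring R" and a: "\<forall>n. a n \<in> carrier R"
  shows "rprod S (\<lambda>n. h (a n)) n = h (rprod R a n)"
  by (induction n) (simp_all add: ring_hom_one[OF h] ring_hom_mult[OF h] rprod_closed[OF R a] a)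

lemma local_quotient:
  assumes loc: "local_ring_with R M" and I: "ideal I R" and IM: "I \<subseteq> M"
  shows "local_ring_with (R Quot I) ((+>\<^bsub>R\<^esub>) I ` M)"
proof -
  note M = local_ring_withD(2)[OF loc] and one = local_ring_withD(4)[OF loc]
    and U = local_ring_withD(5)[OF loc]
  interpret ring R by (rule ideal.axioms(2)[OF I])
  interpret M: ideal M R by (rule M)
  have hom: "(+>\<^bsub>R\<^esub>) I \<in> ring_hom R (R Quot I)" by (rule ideal.rcos_ring_hom[OF I])
  have Q: "ring (R Quot I)" by (rule ideal.quotient_is_ring[OF I])
  have one_Q: "\<one>\<^bsub>R Quot I\<^esub> \<notin> (+>\<^bsub>R\<^esub>) I ` M"
  proof
    assume "\<one>\<^bsub>R Quot I\<^esub> \<in> (+>\<^bsub>R\<^esub>) I ` M"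
    then obtain z where z: "z \<in> M" "I +>\<^bsub>R\<^esub> \<one>\<^bsub>R\<^esub> = I +>\<^bsub>R\<^esub> z" by (auto simp: quot_one)
    then have "\<one>\<^bsub>R\<^esub> \<ominus>\<^bsub>R\<^esub> z \<in> M"
      using quotient_eq_iff_same_a_r_cos[OF I] IM M.Icarr by blast
    then have "(\<one>\<^bsub>R\<^esub> \<ominus>\<^bsub>R\<^esub> z) \<oplus>\<^bsub>R\<^esub> z \<in> M" using z(1) by blast
    then show False using one z(1) M.Icarr by (simp add: a_minus_def a_assoc l_neg)
  qed
  have units: "x \<in> Units (R Quot I)"
    if x: "x \<in> carrier (R Quot I)" "x \<notin> (+>\<^bsub>R\<^esub>) I ` M" for x
  proof -
    obtain z where z: "z \<in> carrier R" "x = I +>\<^bsub>R\<^esub> z" using quot_carrier_E[OF x(1)] by blast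
    then have "z \<in> Units R" using U[OF z(1)] x(2) by blast
    then show ?thesis using ring_hom_Units[OF hom ring_axioms Q] z(2) by simp
  qed
  show ?thesis
    unfolding local_ring_with_def
    using ring_ideal_imp_quot_ideal[OF I M] one_Q units by blast
qed

text \<open>A local ring is semilocal: modulo its maximal ideal it is a division ring.\<close>
lemma local_semilocal:
  assumes loc: "local_ring_with S M"
  shows "semilocal S"
proof -
  note M = local_ring_withD(2)[OF loc]
  have Q: "local_ring_with (S Quot M) ((+>\<^bsub>S\<^esub>) M ` M)" by (rule local_quotient[OF loc M order_refl])
  have "M +>\<^bsub>S\<^esub> m = M" if "m \<in> M" for m
    by (rule ring.a_rcos_zero[OF local_ring_withD(1)[OF loc] M that])
  moreover have "\<zero>\<^bsub>S\<^esub> \<in> M" by (rule additive_subgroup.zero_closed[OF ideal.axioms(1)[OF M]])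
  ultimately have img: "(+>\<^bsub>S\<^esub>) M ` M = {\<zero>\<^bsub>S Quot M\<^esub>}" unfolding quot_zero by force
  have "x \<in> Units (S Quot M)" if "x \<in> carrier (S Quot M)" "x \<noteq> \<zero>\<^bsub>S Quot M\<^esub>" for x
    using local_ring_withD(5)[OF Q that(1)] that(2) unfolding img by blast
  then show ?thesis
    unfolding semilocal_def local_jacobson_radical[OF loc]
    using division_ring_left_artinian[OF local_ring_withD(1)[OF Q]] by blast
qed

lemma left_T_nilpotent_quotient:
  assumes I: "ideal I R" and MR: "M \<subseteq> carrier R" and T: "left_T_nilpotent R M"
  shows "left_T_nilpotent (R Quot I) ((+>\<^bsub>R\<^esub>) I ` M)"
  unfolding left_T_nilpotent_def
proof (intro allI impI)
  fix a :: "nat \<Rightarrow> 'a set" assume "\<forall>n. a n \<in> (+>\<^bsub>R\<^esub>) I ` M"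
  then have "\<forall>n. \<exists>z. z \<in> M \<and> a n = I +>\<^bsub>R\<^esub> z" by blast
  from choice[OF this] obtain b where b: "\<forall>n. b n \<in> M \<and> a n = I +>\<^bsub>R\<^esub> b n" by blast
  then have a: "a = (\<lambda>n. I +>\<^bsub>R\<^esub> b n)" and bc: "\<forall>n. b n \<in> carrier R" using MR by auto
  obtain n where n: "n \<ge> 1" "lprod R b n = \<zero>\<^bsub>R\<^esub>"
    using T b unfolding left_T_nilpotent_def by (elim allE[of _ b]) blast
  have R: "ring R" by (rule ideal.axioms(2)[OF I])
  have "lprod (R Quot I) a n = I +>\<^bsub>R\<^esub> \<zero>\<^bsub>R\<^esub>"
    unfolding a n(2)[symmetric] by (rule ring_hom_lprod[OF ideal.rcos_ring_hom[OF I] R bc])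
  also have "\<dots> = \<zero>\<^bsub>R Quot I\<^esub>"
    unfolding quot_zero
    by (rule ring.a_rcos_zero[OF R I additive_subgroup.zero_closed[OF ideal.axioms(1)[OF I]]])
  finally show "\<exists>n\<ge>1. lprod (R Quot I) a n = \<zero>\<^bsub>R Quot I\<^esub>" using n(1) by blast
qed

lemma local_left_almost_perfect:
  assumes loc: "local_ring_with R M" and T: "left_T_nilpotent R M"
  shows "left_almost_perfect R"
  unfolding left_almost_perfect_def
proof (intro allI impI)
  fix I assume "ideal I R \<and> I \<noteq> {\<zero>\<^bsub>R\<^esub>} \<and> I \<noteq> carrier R"
  then have I: "ideal I R" and proper: "I \<noteq> carrier R" by simp_all
  have IM: "I \<subseteq> M" by (rule local_proper_left_ideal_subset[OF loc ideal_imp_left_ideal[OF I] proper])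
  have Q: "local_ring_with (R Quot I) ((+>\<^bsub>R\<^esub>) I ` M)" by (rule local_quotient[OF loc I IM])
  show "left_perfect (R Quot I)"
    unfolding left_perfect_def local_jacobson_radical[OF Q]
    using local_semilocal[OF Q] left_T_nilpotent_quotient[OF I local_ring_withD(3)[OF loc] T] ..
qed

lemma right_perfect_quotient_rprod:
  assumes loc: "local_ring_with R M" and I: "ideal I R" and IM: "I \<subseteq> M"
    and rp: "right_perfect (R Quot I)" and b: "\<forall>n. b n \<in> M"
  shows "\<exists>n\<ge>1. rprod R b n \<in> I"
proof -
  have Q: "local_ring_with (R Quot I) ((+>\<^bsub>R\<^esub>) I ` M)" by (rule local_quotient[OF loc I IM])
  have R: "ring R" by (rule ideal.axioms(2)[OF I])
  have bc: "\<forall>n. b n \<in> carrier R" using b local_ring_withD(3)[OF loc] by blast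
  have "right_T_nilpotent (R Quot I) ((+>\<^bsub>R\<^esub>) I ` M)"
    using rp unfolding right_perfect_def local_jacobson_radical[OF Q] by blast
  then have "(\<forall>n. I +>\<^bsub>R\<^esub> b n \<in> (+>\<^bsub>R\<^esub>) I ` M) \<longrightarrow>
      (\<exists>n\<ge>1. rprod (R Quot I) (\<lambda>n. I +>\<^bsub>R\<^esub> b n) n = \<zero>\<^bsub>R Quot I\<^esub>)"
    unfolding right_T_nilpotent_def by (rule spec)
  moreover have "\<forall>n. I +>\<^bsub>R\<^esub> b n \<in> (+>\<^bsub>R\<^esub>) I ` M" using b by blast
  ultimately obtain n where n: "n \<ge> 1" "rprod (R Quot I) (\<lambda>n. I +>\<^bsub>R\<^esub> b n) n = \<zero>\<^bsub>R Quot I\<^esub>"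
    by blast
  then have "I +>\<^bsub>R\<^esub> rprod R b n = I"
    using ring_hom_rprod[OF ideal.rcos_ring_hom[OF I] R bc] by (simp add: quot_zero)
  then have "rprod R b n \<in> I" using ideal.rcos_const_imp_mem[OF I rprod_closed[OF R bc]] by blast
  then show ?thesis using n(1) by blast
qed

fun geom_sum :: "('a, 'b) ring_scheme \<Rightarrow> 'a \<Rightarrow> nat \<Rightarrow> 'a" where
  "geom_sum R b 0 = \<zero>\<^bsub>R\<^esub>"
| "geom_sum R b (Suc m) = geom_sum R b m \<oplus>\<^bsub>R\<^esub> b [^]\<^bsub>R\<^esub> m"

lemma (in ring) geom_sum_closed: "b \<in> carrier R \<Longrightarrow> geom_sum R b m \<in> carrier R"
  by (induction m) auto

lemma (in ring) geom_sum_mult_right: "b \<in> carrier R \<Longrightarrow> geom_sum R b m \<otimes> (\<one> \<ominus> b) = \<one> \<ominus> b [^] m"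
proof (induction m)
  case 0 then show ?case by (simp add: a_minus_def r_neg)
next
  case (Suc m)
  have p: "b [^] m \<in> carrier R" and g: "geom_sum R b m \<in> carrier R"
    using Suc.prems geom_sum_closed by simp_all
  have "geom_sum R b (Suc m) \<otimes> (\<one> \<ominus> b) = geom_sum R b m \<otimes> (\<one> \<ominus> b) \<oplus> b [^] m \<otimes> (\<one> \<ominus> b)"
    using p g Suc.prems by (simp add: l_distr)
  also have "\<dots> = \<one> \<ominus> b [^] m \<oplus> b [^] m \<otimes> (\<one> \<ominus> b)" using Suc by simp
  also have "\<dots> = \<one> \<ominus> b [^] m \<otimes> b" using p Suc.prems
    by (simp add: a_minus_def a_assoc r_distr r_minus r_neg1)
  finally show ?case by simp
qed

lemma (in ring) geom_sum_mult_left: "b \<in> carrier R \<Longrightarrow> (\<one> \<ominus> b) \<otimes> geom_sum R b m = \<one> \<ominus> b [^] m"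
proof (induction m)
  case 0 then show ?case by (simp add: a_minus_def r_neg)
next
  case (Suc m)
  have p: "b [^] m \<in> carrier R" and g: "geom_sum R b m \<in> carrier R"
    using Suc.prems geom_sum_closed by simp_all
  have "(\<one> \<ominus> b) \<otimes> geom_sum R b (Suc m) = (\<one> \<ominus> b) \<otimes> geom_sum R b m \<oplus> (\<one> \<ominus> b) \<otimes> b [^] m"
    using p g Suc.prems by (simp add: r_distr)
  also have "\<dots> = \<one> \<ominus> b [^] m \<oplus> (\<one> \<ominus> b) \<otimes> b [^] m" using Suc by simp
  also have "\<dots> = \<one> \<ominus> b \<otimes> b [^] m" using p Suc.prems
    by (simp add: a_minus_def a_assoc l_distr l_minus r_neg1)
  finally show ?case using nat_pow_Suc2[OF Suc.prems] by simp
qed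

text \<open>If \<open>b\<close> is nilpotent then \<open>1 - b\<close> is a unit, with inverse the geometric sum.\<close>
lemma (in ring) one_minus_nilpotent_Units:
  assumes "b \<in> carrier R" "b [^] (n::nat) = \<zero>"
  shows "\<one> \<ominus> b \<in> Units R"
  unfolding Units_def
  using geom_sum_mult_left[OF assms(1), of n] geom_sum_mult_right[OF assms(1), of n]
    geom_sum_closed[OF assms(1), of n] assms
  by (auto simp: a_minus_def)

text \<open>Elements of a left T-nilpotent set are nilpotent (take the constant sequence).\<close>
lemma left_T_nilpotent_nilpotent:
  assumes "left_T_nilpotent R M" "b \<in> M"
  shows "\<exists>n. b [^]\<^bsub>R\<^esub> (n::nat) = \<zero>\<^bsub>R\<^esub>"
proof -
  have pow: "lprod R (\<lambda>_. b) n = b [^]\<^bsub>R\<^esub> n" for n by (induction n) simp_all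
  have "\<exists>n\<ge>1. lprod R (\<lambda>_. b) n = \<zero>\<^bsub>R\<^esub>"
    using assms unfolding left_T_nilpotent_def by (elim allE[of _ "\<lambda>_. b"]) blast
  then show ?thesis unfolding pow by blast
qed

section \<open>Arithmetic of row-finite matrices\<close>

definition madd :: "'k::field mat \<Rightarrow> 'k mat \<Rightarrow> 'k mat" where
  "madd A B = (\<lambda>i j. A i j + B i j)"

definition msc :: "'k::field \<Rightarrow> 'k mat \<Rightarrow> 'k mat" where
  "msc c A = (\<lambda>i j. c * A i j)"

lemma mat_mult_sum_superset:
  assumes "finite S" "{l. A i l \<noteq> 0} \<subseteq> S"
  shows "mat_mult A B i j = (\<Sum>l\<in>S. A i l * B l j)"
  unfolding mat_mult_def by (rule sum.mono_neutral_left) (use assms in auto)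

lemma mat_mult_nonzero:
  assumes "mat_mult A B i j \<noteq> 0"
  obtains l where "A i l \<noteq> 0" "B l j \<noteq> 0"
proof -
  have "\<exists>l. A i l \<noteq> 0 \<and> B l j \<noteq> 0"
  proof (rule ccontr)
    assume "\<nexists>l. A i l \<noteq> 0 \<and> B l j \<noteq> 0"
    then have "mat_mult A B i j = 0" unfolding mat_mult_def by (intro sum.neutral) auto
    with assms show False by simp
  qed
  then show ?thesis using that by blast
qed

lemma mat_mult_assoc:
  assumes "row_finite A" "row_finite B"
  shows "mat_mult (mat_mult A B) C = mat_mult A (mat_mult B C)"
proof (intro ext)
  fix i j
  define S where "S = {l. A i l \<noteq> 0}"
  define T where "T = (\<Union>l\<in>S. {m. B l m \<noteq> 0})"
  have fS: "finite S" using assms(1) unfolding row_finite_def S_def by auto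
  have fT: "finite T" unfolding T_def using fS assms(2) unfolding row_finite_def by auto
  have sub: "{m. mat_mult A B i m \<noteq> 0} \<subseteq> T"
    by (auto simp: T_def S_def elim: mat_mult_nonzero)
  have "mat_mult (mat_mult A B) C i j = (\<Sum>m\<in>T. (\<Sum>l\<in>S. A i l * B l m) * C m j)"
    using mat_mult_sum_superset[of T "mat_mult A B" i C j, OF fT sub] by (simp add: mat_mult_def S_def)
  also have "\<dots> = (\<Sum>m\<in>T. \<Sum>l\<in>S. A i l * B l m * C m j)"
    by (simp add: sum_distrib_right)
  also have "\<dots> = (\<Sum>l\<in>S. \<Sum>m\<in>T. A i l * B l m * C m j)"
    by (rule sum.swap)
  also have "\<dots> = (\<Sum>l\<in>S. A i l * (\<Sum>m\<in>T. B l m * C m j))"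
    by (simp add: sum_distrib_left mult.assoc)
  also have "\<dots> = (\<Sum>l\<in>S. A i l * mat_mult B C l j)"
  proof (rule sum.cong[OF refl])
    fix l assume "l \<in> S"
    then have "{m. B l m \<noteq> 0} \<subseteq> T" unfolding T_def by auto
    then show "A i l * (\<Sum>m\<in>T. B l m * C m j) = A i l * mat_mult B C l j"
      using mat_mult_sum_superset[of T B l C j, OF fT] by simp
  qed
  also have "\<dots> = mat_mult A (mat_mult B C) i j" by (simp add: mat_mult_def S_def)
  finally show "mat_mult (mat_mult A B) C i j = mat_mult A (mat_mult B C) i j" .
qed

lemma mat_mult_add_right: "mat_mult A (madd B C) = madd (mat_mult A B) (mat_mult A C)"
  by (simp add: mat_mult_def madd_def distrib_left sum.distrib)

lemma mat_mult_add_left: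
  assumes "row_finite A" "row_finite B"
  shows "mat_mult (madd A B) C = madd (mat_mult A C) (mat_mult B C)"
proof (intro ext)
  fix i j
  define S where "S = {l. A i l \<noteq> 0} \<union> {l. B i l \<noteq> 0}"
  have fS: "finite S" using assms unfolding row_finite_def S_def by auto
  have sub: "{l. A i l \<noteq> 0} \<subseteq> S" "{l. B i l \<noteq> 0} \<subseteq> S" "{l. madd A B i l \<noteq> 0} \<subseteq> S"
    by (auto simp: S_def madd_def)
  show "mat_mult (madd A B) C i j = madd (mat_mult A C) (mat_mult B C) i j"
    unfolding madd_def mat_mult_sum_superset[of S A i C j, OF fS sub(1)]
      mat_mult_sum_superset[of S B i C j, OF fS sub(2)]
      mat_mult_sum_superset[of S "\<lambda>i j. A i j + B i j" i C j, OF fS sub(3)[unfolded madd_def]]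
    by (simp add: distrib_right sum.distrib)
qed

lemma mat_mult_scale_right: "mat_mult A (msc c B) = msc c (mat_mult A B)"
  by (simp add: mat_mult_def msc_def sum_distrib_left mult.left_commute)

lemma mat_mult_scalar_left: "mat_mult (msc c mat_one) B = msc c B"
proof (intro ext)
  fix i j
  have "{l. msc c (mat_one::'a mat) i l \<noteq> 0} \<subseteq> {i}" by (auto simp: msc_def mat_one_def)
  then show "mat_mult (msc c mat_one) B i j = msc c B i j"
    by (simp add: mat_mult_sum_superset[of "{i}"] msc_def mat_one_def)
qed

lemma mat_mult_one_left: "mat_mult mat_one B = B"
  using mat_mult_scalar_left[of 1 B] by (simp add: msc_def)

lemma mat_mult_one_right: assumes "row_finite A" shows "mat_mult A mat_one = A"
proof (intro ext)
  fix i j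
  have f: "finite (insert j {l. A i l \<noteq> 0})" using assms by (auto simp: row_finite_def)
  have "mat_mult A mat_one i j = (\<Sum>l\<in>insert j {l. A i l \<noteq> 0}. A i l * mat_one l j)"
    by (rule mat_mult_sum_superset[OF f]) auto
  also have "\<dots> = A i j" using f by (simp add: mat_one_def if_distrib cong: if_cong)
  finally show "mat_mult A mat_one i j = A i j" .
qed

lemma mat_mult_unit_left: "mat_mult (mat_unit p q) B = (\<lambda>i j. if i = p then B q j else 0)"
proof (intro ext)
  fix i j
  have "{l. (mat_unit p q::'a mat) i l \<noteq> 0} = (if i = p then {q} else {})" by (auto simp: mat_unit_def)
  then show "mat_mult (mat_unit p q) B i j = (if i = p then B q j else 0)"
    by (simp add: mat_mult_def mat_unit_def)
qed

section \<open>The ring \<open>R = k + N\<close>\<close>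

lemma N_setI: "finite {(i, j). A i j \<noteq> 0} \<Longrightarrow> (\<And>i j. i \<le> j \<Longrightarrow> A i j = 0) \<Longrightarrow> A \<in> N_set"
  by (simp add: N_set_def)

lemma N_set_finite: "A \<in> N_set \<Longrightarrow> finite {(i, j). A i j \<noteq> 0}"
  by (simp add: N_set_def)

lemma N_set_lower: "A \<in> N_set \<Longrightarrow> i \<le> j \<Longrightarrow> A i j = 0"
  by (simp add: N_set_def)

lemma N_row_finite: assumes "A \<in> N_set" shows "row_finite A"
proof -
  have "{j. A i j \<noteq> 0} \<subseteq> snd ` {(i, j). A i j \<noteq> 0}" for i by force
  then show ?thesis unfolding row_finite_def using N_set_finite[OF assms] finite_subset by blast
qed

lemma N_zero: "(\<lambda>i j. 0) \<in> N_set"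
  by (rule N_setI) auto

lemma N_add: assumes "A \<in> N_set" "B \<in> N_set" shows "madd A B \<in> N_set"
proof (rule N_setI)
  have "{(i, j). madd A B i j \<noteq> 0} \<subseteq> {(i, j). A i j \<noteq> 0} \<union> {(i, j). B i j \<noteq> 0}"
    by (auto simp: madd_def)
  then show "finite {(i, j). madd A B i j \<noteq> 0}"
    using N_set_finite[OF assms(1)] N_set_finite[OF assms(2)] by (meson finite_UnI finite_subset)
qed (use assms in \<open>auto simp: madd_def N_set_lower\<close>)

lemma N_scale: assumes "A \<in> N_set" shows "msc c A \<in> N_set"
proof (rule N_setI)
  have "{(i, j). msc c A i j \<noteq> 0} \<subseteq> {(i, j). A i j \<noteq> 0}" by (auto simp: msc_def)
  then show "finite {(i, j). msc c A i j \<noteq> 0}" using N_set_finite[OF assms] finite_subset by blast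
qed (use assms in \<open>auto simp: msc_def N_set_lower\<close>)

text \<open>A product of strictly lower triangular matrices is strictly lower triangular; its support lies in
  the rows of the first and the columns of the second factor.\<close>
lemma N_mult: assumes "A \<in> N_set" "B \<in> N_set" shows "mat_mult A B \<in> N_set"
proof (rule N_setI)
  have "{(i, j). mat_mult A B i j \<noteq> 0} \<subseteq> fst ` {(i, j). A i j \<noteq> 0} \<times> snd ` {(i, j). B i j \<noteq> 0}"
    by (force elim: mat_mult_nonzero)
  then show "finite {(i, j). mat_mult A B i j \<noteq> 0}"
    using N_set_finite[OF assms(1)] N_set_finite[OF assms(2)]
    by (meson finite_SigmaI finite_imageI finite_subset)
next
  fix i j :: nat assume "i \<le> j"
  show "mat_mult A B i j = 0"
  proof (rule ccontr)
    assume "mat_mult A B i j \<noteq> 0"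
    then obtain l where "A i l \<noteq> 0" "B l j \<noteq> 0" by (rule mat_mult_nonzero)
    then have "l < i" "j < l" using N_set_lower[OF assms(1)] N_set_lower[OF assms(2)] by (meson not_le)+
    then show False using \<open>i \<le> j\<close> by simp
  qed
qed

lemma R_carrier_iff: "X \<in> R_carrier \<longleftrightarrow> (\<exists>c A. A \<in> N_set \<and> X = madd (msc c mat_one) A)"
  unfolding R_carrier_def madd_def msc_def by blast

lemma N_subset_R: "N_set \<subseteq> R_carrier"
proof
  fix A assume "A \<in> N_set"
  moreover have "A = madd (msc 0 mat_one) A" by (simp add: madd_def msc_def)
  ultimately show "A \<in> R_carrier" unfolding R_carrier_iff by blast
qed

lemma scalar_in_R: "msc c mat_one \<in> R_carrier"
  unfolding R_carrier_iff using N_zero by (force simp: madd_def)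

lemma R_add: assumes "X \<in> R_carrier" "Y \<in> R_carrier" shows "madd X Y \<in> R_carrier"
proof -
  obtain c A d B where "A \<in> N_set" "X = madd (msc c mat_one) A" "B \<in> N_set" "Y = madd (msc d mat_one) B"
    using assms R_carrier_iff by metis
  then have "A \<in> N_set \<and> B \<in> N_set \<and> madd X Y = madd (msc (c + d) mat_one) (madd A B)"
    by (auto simp: madd_def msc_def algebra_simps)
  then show ?thesis unfolding R_carrier_iff using N_add by blast
qed

lemma R_scale: assumes "X \<in> R_carrier" shows "msc c X \<in> R_carrier"
proof -
  obtain d A where "A \<in> N_set" "X = madd (msc d mat_one) A" using assms R_carrier_iff by blast
  then have "A \<in> N_set \<and> msc c X = madd (msc (c * d) mat_one) (msc c A)"
    by (auto simp: madd_def msc_def algebra_simps)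
  then show ?thesis unfolding R_carrier_iff using N_scale by blast
qed

lemma R_row_finite: assumes "X \<in> R_carrier" shows "row_finite X"
proof -
  obtain c A where A: "A \<in> N_set" "X = madd (msc c mat_one) A" using assms R_carrier_iff by blast
  have "{j. X i j \<noteq> 0} \<subseteq> insert i {j. A i j \<noteq> 0}" for i
    by (auto simp: A madd_def msc_def mat_one_def)
  then show ?thesis using N_row_finite[OF A(1)] unfolding row_finite_def
    by (meson finite_insert finite_subset)
qed

lemma N_mult_R_left: assumes "A \<in> N_set" "X \<in> R_carrier" shows "mat_mult X A \<in> N_set"
proof -
  obtain c B where B: "B \<in> N_set" "X = madd (msc c mat_one) B" using assms R_carrier_iff by blast
  have "mat_mult X A = madd (msc c A) (mat_mult B A)"
    unfolding B(2) mat_mult_add_left[OF R_row_finite[OF scalar_in_R] N_row_finite[OF B(1)]]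
    by (simp add: mat_mult_scalar_left)
  moreover have "madd (msc c A) (mat_mult B A) \<in> N_set" by (intro N_add N_scale N_mult assms(1) B(1))
  ultimately show ?thesis by simp
qed

lemma N_mult_R_right: assumes "A \<in> N_set" "X \<in> R_carrier" shows "mat_mult A X \<in> N_set"
proof -
  obtain c B where B: "B \<in> N_set" "X = madd (msc c mat_one) B" using assms R_carrier_iff by blast
  have "mat_mult A X = madd (msc c A) (mat_mult A B)"
    unfolding B(2) by (simp add: mat_mult_add_right mat_mult_scale_right mat_mult_one_right N_row_finite[OF assms(1)])
  moreover have "madd (msc c A) (mat_mult A B) \<in> N_set" by (intro N_add N_scale N_mult assms(1) B(1))
  ultimately show ?thesis by simp
qed

lemma R_mult: assumes "X \<in> R_carrier" "Y \<in> R_carrier" shows "mat_mult X Y \<in> R_carrier"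
proof -
  obtain c A where A: "A \<in> N_set" "X = madd (msc c mat_one) A" using assms R_carrier_iff by blast
  have "mat_mult X Y = madd (msc c Y) (mat_mult A Y)"
    unfolding A(2) mat_mult_add_left[OF R_row_finite[OF scalar_in_R] N_row_finite[OF A(1)]]
    by (simp add: mat_mult_scalar_left)
  moreover have "madd (msc c Y) (mat_mult A Y) \<in> R_carrier"
    using R_add R_scale N_mult_R_right[OF A(1) assms(2)] assms(2) N_subset_R by blast
  ultimately show ?thesis by simp
qed

lemma R_ring_simps [simp]:
  "carrier R_ring = R_carrier" "mult R_ring = mat_mult" "one R_ring = mat_one"
  "zero R_ring = (\<lambda>i j. 0)" "add R_ring = madd"
  by (auto simp: R_ring_def komega_def madd_def[abs_def])

lemma R_ring: "ring (R_ring :: 'k::field mat ring)"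
proof (rule ringI)
  show "abelian_group (R_ring :: 'k mat ring)"
  proof (rule abelian_groupI, simp_all add: R_add)
    show "(\<lambda>i j. 0::'k) \<in> R_carrier" using N_subset_R N_zero by blast
  next
    fix x y z :: "'k mat"
    show "madd (madd x y) z = madd x (madd y z)" "madd x y = madd y x" "madd (\<lambda>i j. 0) x = x"
      by (auto simp: madd_def algebra_simps)
  next
    fix x :: "'k mat" assume "x \<in> R_carrier"
    moreover have "madd (msc (-1) x) x = (\<lambda>i j. 0)" by (simp add: madd_def msc_def)
    ultimately show "\<exists>y\<in>R_carrier. madd y x = (\<lambda>i j. 0)" using R_scale by blast
  qed
next
  show "monoid (R_ring :: 'k mat ring)"
  proof (rule monoidI, simp_all add: R_mult)
    show "(mat_one :: 'k mat) \<in> R_carrier" using scalar_in_R[of 1] by (simp add: msc_def)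
  next
    fix x y z :: "'k mat" assume "x \<in> R_carrier" "y \<in> R_carrier" "z \<in> R_carrier"
    then show "mat_mult (mat_mult x y) z = mat_mult x (mat_mult y z)"
      by (simp add: mat_mult_assoc R_row_finite)
  next
    fix x :: "'k mat" assume "x \<in> R_carrier"
    then show "mat_mult mat_one x = x" "mat_mult x mat_one = x"
      by (simp_all add: mat_mult_one_left mat_mult_one_right R_row_finite)
  qed
next
  fix x y z :: "'k mat" assume "x \<in> carrier R_ring" "y \<in> carrier R_ring" "z \<in> carrier R_ring"
  then show "(x \<oplus>\<^bsub>R_ring\<^esub> y) \<otimes>\<^bsub>R_ring\<^esub> z = x \<otimes>\<^bsub>R_ring\<^esub> z \<oplus>\<^bsub>R_ring\<^esub> y \<otimes>\<^bsub>R_ring\<^esub> z"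
    "z \<otimes>\<^bsub>R_ring\<^esub> (x \<oplus>\<^bsub>R_ring\<^esub> y) = z \<otimes>\<^bsub>R_ring\<^esub> x \<oplus>\<^bsub>R_ring\<^esub> z \<otimes>\<^bsub>R_ring\<^esub> y"
    by (simp_all add: mat_mult_add_left mat_mult_add_right R_row_finite)
qed

lemma R_minus: assumes "X \<in> R_carrier" shows "\<ominus>\<^bsub>R_ring\<^esub> X = msc (-1) X"
proof -
  interpret ring R_ring by (rule R_ring)
  show ?thesis
  proof (rule minus_equality)
    show "msc (-1) X \<oplus>\<^bsub>R_ring\<^esub> X = \<zero>\<^bsub>R_ring\<^esub>" by (simp add: madd_def msc_def)
  qed (simp_all add: assms R_scale)
qed

lemma R_idealI:
  assumes "J \<subseteq> R_carrier" "(\<lambda>i j. 0) \<in> J"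
    and "\<And>A B. A \<in> J \<Longrightarrow> B \<in> J \<Longrightarrow> madd A B \<in> J" "\<And>A. A \<in> J \<Longrightarrow> msc (-1) A \<in> J"
    and "\<And>A X. A \<in> J \<Longrightarrow> X \<in> R_carrier \<Longrightarrow> mat_mult X A \<in> J \<and> mat_mult A X \<in> J"
  shows "ideal J (R_ring :: 'k::field mat ring)"
proof -
  interpret ring "R_ring :: 'k mat ring" by (rule R_ring)
  show ?thesis
  proof (rule idealI)
    show "subgroup J (add_monoid (R_ring :: 'k mat ring))"
    proof (rule add.subgroupI)
      fix A assume A: "A \<in> J"
      then have "A \<in> R_carrier" using assms(1) by blast
      show "\<ominus>\<^bsub>R_ring\<^esub> A \<in> J" unfolding R_minus[OF \<open>A \<in> R_carrier\<close>] using assms(4)[OF A] .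
    qed (use assms in auto)
  qed (use R_ring assms in auto)
qed

lemma N_ideal: "ideal N_set (R_ring :: 'k::field mat ring)"
  by (rule R_idealI) (auto simp: N_subset_R[THEN subsetD] N_zero N_add N_scale N_mult_R_left N_mult_R_right)

lemma one_notin_N: "(mat_one :: 'k::field mat) \<notin> N_set"
  using N_set_lower[of "mat_one :: 'k mat" 0 0] by (auto simp: mat_one_def)

text \<open>Left products of elements of \<open>N\<close> move the support strictly down-left: if all non-zero rows of
  the first factor lie below \<open>M\<close>, a product of \<open>n + 1\<close> factors is supported in positions \<open>(i, j)\<close>
  with \<open>j + n + 1 \<le> i < M\<close>.\<close>
lemma lprod_N_support:
  assumes a: "\<forall>n. a n \<in> N_set" and M: "\<forall>i j. a 0 i j \<noteq> 0 \<longrightarrow> i < M"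
    and nz: "lprod R_ring a (Suc n) i j \<noteq> 0"
  shows "j + Suc n \<le> i \<and> i < M"
  using nz
proof (induction n arbitrary: j)
  case 0
  then have "a 0 i j \<noteq> 0" by (simp add: mat_mult_one_left)
  then show ?case using N_set_lower[of "a 0" i j] a M by force
next
  case (Suc n)
  then obtain l where l: "lprod R_ring a (Suc n) i l \<noteq> 0" "a (Suc n) l j \<noteq> 0"
    by (auto elim: mat_mult_nonzero)
  have "j < l" using N_set_lower[of "a (Suc n)" l j] a l(2) by (meson not_le)
  then show ?case using Suc.IH[OF l(1)] by simp
qed

lemma N_left_T_nilpotent: "left_T_nilpotent (R_ring :: 'k::field mat ring) N_set"
  unfolding left_T_nilpotent_def
proof (intro allI impI)
  fix a :: "nat \<Rightarrow> 'k mat" assume a: "\<forall>n. a n \<in> N_set"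
  have "finite (fst ` {(i, j). a 0 i j \<noteq> 0})" using N_set_finite a by blast
  then obtain M where "\<forall>x\<in>fst ` {(i, j). a 0 i j \<noteq> 0}. x < M"
    using finite_nat_set_iff_bounded by blast
  then have M: "\<forall>i j. a 0 i j \<noteq> 0 \<longrightarrow> i < M" by force
  have "lprod R_ring a (Suc M) = (\<lambda>i j. 0)" using lprod_N_support[OF a M] by fastforce
  then show "\<exists>n\<ge>1. lprod R_ring a n = \<zero>\<^bsub>R_ring\<^esub>" by (intro exI[of _ "Suc M"]) simp
qed

text \<open>An element \<open>c + A\<close> with \<open>c \<noteq> 0\<close> factors as the unit \<open>c\<close> times \<open>1 + A/c\<close>, the latter being a
  unit because \<open>A/c\<close> is nilpotent.\<close>
lemma R_Units:
  assumes X: "X \<in> R_carrier" "X \<notin> N_set"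
  shows "X \<in> Units (R_ring :: 'k::field mat ring)"
proof -
  interpret ring "R_ring :: 'k mat ring" by (rule R_ring)
  obtain c A where A: "A \<in> N_set" "X = madd (msc c mat_one) A" using X R_carrier_iff by blast
  have c: "c \<noteq> 0" using A X(2) by (auto simp: madd_def msc_def)
  define B where "B = msc (- 1 / c) A"
  have B: "B \<in> N_set" "B \<in> carrier R_ring" unfolding B_def using N_scale A(1) N_subset_R by auto
  obtain n where "B [^]\<^bsub>R_ring\<^esub> (n::nat) = \<zero>\<^bsub>R_ring\<^esub>"
    using left_T_nilpotent_nilpotent[OF N_left_T_nilpotent B(1)] by blast
  then have unit1: "\<one>\<^bsub>R_ring\<^esub> \<ominus>\<^bsub>R_ring\<^esub> B \<in> Units R_ring"
    by (rule one_minus_nilpotent_Units[OF B(2)])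
  have "mat_mult (msc (1 / c) mat_one) (msc c mat_one) = mat_one"
    "mat_mult (msc c mat_one) (msc (1 / c) mat_one) = (mat_one :: 'k mat)"
    using c by (simp_all add: mat_mult_scalar_left, simp_all add: msc_def)
  then have unit2: "msc c mat_one \<in> Units R_ring"
    unfolding Units_def using scalar_in_R[of c] scalar_in_R[of "1 / c"] by auto
  have "msc c mat_one \<otimes>\<^bsub>R_ring\<^esub> (\<one>\<^bsub>R_ring\<^esub> \<ominus>\<^bsub>R_ring\<^esub> B) = msc c (\<one>\<^bsub>R_ring\<^esub> \<ominus>\<^bsub>R_ring\<^esub> B)"
    by (simp add: mat_mult_scalar_left)
  also have "\<dots> = X"
    unfolding a_minus_def R_minus[OF B(2)[simplified]] unfolding A(2) B_def
    using c by (intro ext) (simp add: madd_def msc_def field_simps)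
  finally have "msc c mat_one \<otimes>\<^bsub>R_ring\<^esub> (\<one>\<^bsub>R_ring\<^esub> \<ominus>\<^bsub>R_ring\<^esub> B) = X" .
  then show ?thesis using Units_m_closed[OF unit2 unit1] by simp
qed

lemma R_local: "local_ring_with (R_ring :: 'k::field mat ring) N_set"
  unfolding local_ring_with_def using N_ideal one_notin_N R_Units by auto

section \<open>The ideal generated by \<open>E_{2,1}\<close>\<close>

definition first_column :: "'k::field mat set" where
  "first_column = {A \<in> N_set. \<forall>i j. j \<noteq> 0 \<longrightarrow> A i j = 0}"

lemma first_column_ideal: "ideal first_column (R_ring :: 'k::field mat ring)"
proof (rule R_idealI)
  fix A X :: "'k mat" assume A: "A \<in> first_column" and X: "X \<in> R_carrier"
  have col: "A i j = 0" if "j \<noteq> 0" for i j using A that by (simp add: first_column_def)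
  obtain c B where B: "B \<in> N_set" "X = madd (msc c mat_one) B" using X R_carrier_iff by blast
  have X0: "X 0 j = 0" if "j \<noteq> 0" for j
    using that N_set_lower[OF B(1), of 0 j] by (simp add: B(2) madd_def msc_def mat_one_def)
  have "mat_mult X A i j = 0" if "j \<noteq> 0" for i j
  proof (rule ccontr)
    assume "mat_mult X A i j \<noteq> 0"
    then obtain l where "A l j \<noteq> 0" by (rule mat_mult_nonzero)
    then show False using col[OF that] by simp
  qed
  moreover have "mat_mult A X i j = 0" if "j \<noteq> 0" for i j
  proof (rule ccontr)
    assume "mat_mult A X i j \<noteq> 0"
    then obtain l where "A i l \<noteq> 0" "X l j \<noteq> 0" by (rule mat_mult_nonzero)
    then show False using col X0[OF that] by (cases "l = 0") auto
  qed
  moreover have "A \<in> N_set" using A by (simp add: first_column_def)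
  ultimately show "mat_mult X A \<in> first_column \<and> mat_mult A X \<in> first_column"
    using N_mult_R_left[OF _ X] N_mult_R_right[OF _ X] by (simp add: first_column_def)
next
  fix A B :: "'k mat" assume "A \<in> first_column" "B \<in> first_column"
  then show "madd A B \<in> first_column"
    unfolding first_column_def using N_add[of A B] by (auto simp: madd_def)
next
  fix A :: "'k mat" assume "A \<in> first_column"
  then show "msc (-1) A \<in> first_column"
    unfolding first_column_def using N_scale[of A "-1"] by (auto simp: msc_def)
qed (auto simp: first_column_def N_subset_R[THEN subsetD] N_zero)

lemma mat_unit_N: "q < p \<Longrightarrow> (mat_unit p q :: 'k::field mat) \<in> N_set"
proof (rule N_setI)
  have "{(i, j). (mat_unit p q :: 'k mat) i j \<noteq> 0} = {(p, q)}" by (auto simp: mat_unit_def)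
  then show "finite {(i, j). (mat_unit p q :: 'k mat) i j \<noteq> 0}" by simp
qed (auto simp: mat_unit_def)

text \<open>Since \<open>E_{2,1}\<close> is supported in the first column, so is every element of the ideal it generates.\<close>
lemma genideal_E21_first_column:
  "genideal (R_ring :: 'k::field mat ring) {mat_unit 1 0} \<subseteq> first_column"
proof -
  interpret ring "R_ring :: 'k mat ring" by (rule R_ring)
  have "(mat_unit 1 0 :: 'k mat) \<in> first_column"
    using mat_unit_N[of 0 1] by (auto simp: first_column_def mat_unit_def)
  then show ?thesis using genideal_minimal[OF first_column_ideal] by simp
qed

text \<open>The right products \<open>E_{n+2,n+1} \<cdots> E_{3,2} E_{2,1} = E_{n+2,1}\<close> (0-based indices here).\<close>
lemma rprod_subdiagonal_units:
  "rprod (R_ring :: 'k::field mat ring) (\<lambda>n. mat_unit (n + 2) (n + 1)) (Suc n) = mat_unit (n + 2) 1"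
proof (induction n)
  case 0
  show ?case by (simp add: mat_mult_unit_left, intro ext) (simp add: mat_unit_def mat_one_def)
next
  case (Suc n)
  then show ?case by (simp add: mat_mult_unit_left, intro ext) (simp add: mat_unit_def)
qed

lemma genideal_E21:
  defines "I \<equiv> genideal (R_ring :: 'k::field mat ring) {mat_unit 1 0}"
  shows "ideal I R_ring" "I \<subseteq> N_set" "I \<noteq> {\<zero>\<^bsub>R_ring\<^esub>}"
proof -
  interpret ring "R_ring :: 'k mat ring" by (rule R_ring)
  have E21: "(mat_unit 1 0 :: 'k mat) \<in> carrier R_ring" using mat_unit_N[of 0 1] N_subset_R by auto
  show "ideal I R_ring" unfolding I_def using genideal_ideal E21 by simp
  show "I \<subseteq> N_set" unfolding I_def using genideal_E21_first_column by (auto simp: first_column_def)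
  have "(mat_unit 1 0 :: 'k mat) \<noteq> \<zero>\<^bsub>R_ring\<^esub>"
  proof
    assume "(mat_unit 1 0 :: 'k mat) = \<zero>\<^bsub>R_ring\<^esub>"
    then have "(mat_unit 1 0 :: 'k mat) 1 0 = 0" by simp
    then show False by (simp add: mat_unit_def)
  qed
  then show "I \<noteq> {\<zero>\<^bsub>R_ring\<^esub>}" unfolding I_def using genideal_self'[OF E21] by blast
qed

text \<open>\<open>R/I\<close> is not right perfect: the right products of the \<open>E_{n+2,n+1}\<close> never fall into \<open>I\<close>.\<close>
lemma quotient_E21_not_right_perfect:
  "\<not> right_perfect ((R_ring :: 'k::field mat ring) Quot genideal R_ring {mat_unit 1 0})"
proof
  let ?I = "genideal (R_ring :: 'k mat ring) {mat_unit 1 0}"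
  assume rp: "right_perfect (R_ring Quot ?I)"
  have "\<forall>n. (mat_unit (n + 2) (n + 1) :: 'k mat) \<in> N_set" by (simp add: mat_unit_N)
  from right_perfect_quotient_rprod[OF R_local genideal_E21(1,2) rp this]
  obtain n where "n \<ge> 1" "rprod R_ring (\<lambda>n. mat_unit (n + 2) (n + 1)) n \<in> ?I" by blast
  then obtain m where "rprod R_ring (\<lambda>n. mat_unit (n + 2) (n + 1)) (Suc m) \<in> ?I"
    by (cases n) auto
  then have "(mat_unit (m + 2) 1 :: 'k mat) \<in> ?I" unfolding rprod_subdiagonal_units .
  then have "(mat_unit (m + 2) 1 :: 'k mat) \<in> first_column" using genideal_E21_first_column by blast
  then have "(mat_unit (m + 2) 1 :: 'k mat) (m + 2) 1 = 0" unfolding first_column_def by blast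
  then show False by (simp add: mat_unit_def)
qed

theorem mainTheorem10:
  shows "left_almost_perfect (R_ring :: 'k::field mat ring)
       \<and> \<not> right_almost_perfect (R_ring :: 'k::field mat ring)
       \<and> \<not> right_perfect ((R_ring :: 'k::field mat ring) Quot
              (genideal (R_ring :: 'k::field mat ring) {mat_unit 1 0}))"
proof -
  interpret ring "R_ring :: 'k mat ring" by (rule R_ring)
  let ?I = "genideal (R_ring :: 'k::field mat ring) {mat_unit 1 0}"
  have "?I \<noteq> carrier R_ring" using genideal_E21(2) one_notin_N one_closed by auto
  then have "\<not> right_almost_perfect (R_ring :: 'k mat ring)"
    using genideal_E21(1,3) quotient_E21_not_right_perfect
    unfolding right_almost_perfect_def by blast
  then show ?thesis
    using local_left_almost_perfect[OF R_local N_left_T_nilpotent] quotient_E21_not_right_perfect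
    by blast
qed

end
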